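(* Let $L:\mathbb{T}^d\times\mathbb{R}^d\to\mathbb{R}$ be continuous with $\lim_{|v|\to\infty}\inf_{x\in\mathbb{T}^d}L(x,v)/|v|=+\infty$, and let $(\varphi,\overline{H})$, with $\varphi:\mathbb{T}^d\to\mathbb{R}$ Lipschitz continuous and $\overline{H}\in\mathbb{R}$, be a supersolution to $H(x,-\nabla\varphi)=\overline{H}$. Given $\varepsilon>0$, there exist $\varkappa_0>0$ and a function $\delta:(0,\varkappa_0]\to(0,+\infty)$ such that for all $r>0$, $\varkappa\in(0,\varkappa_0]$, all partitions $\Delta$ of $[0,r]$ with $d(\Delta)\le\delta(\varkappa)$, and every $y\in\mathbb{T}^d$, \[\varphi(x_{y,\varkappa,r,\Delta}(r))+\int_0^rL(x_{y,\varkappa,r,\Delta}(t),v_{y,\varkappa,r,\Delta}(t))\,dt\le\varphi(y)-\overline{H}r+(r+1)\varepsilon.\]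
   Context: $\mathbb{T}^d=\mathbb{R}^d/\mathbb{Z}^d$; $x+v$ is the translate of $x\in\mathbb{T}^d$ by $v\in\mathbb{R}^d$. Vectors in $\mathbb{R}^d$ are columns, covectors rows. Hamiltonian: $H(x,p)=\max_{v\in\mathbb{R}^d}[pv-L(x,v)]$. Hadamard subdifferential: $p\in\partial_D^-\varphi(x)$ iff for all $w\in\mathbb{R}^d$, $\liminf_{h\downarrow0,w'\to w}\frac{\varphi(x+hw')-\varphi(x)}{h}\ge pw$. A pair $(\varphi,\overline{H})$ with $\varphi$ lower semicontinuous is a supersolution to $H(x,-\nabla\varphi)=\overline{H}$ if $H(x,-p)\ge\overline{H}$ for all $x\in\mathbb{T}^d$ and $p\in\partial_D^-\varphi(x)$. Moreau–Yosida transform: $\varphi_\varkappa(x)=\inf\{\varphi(x+v)+\frac{1}{2\varkappa^2}|v|^2:v\in\mathbb{R}^d\}$; $b_\varkappa[x]$ is a chosen vector with $\varphi(x+b_\varkappa[x])+\frac{1}{2\varkappa^2}|b_\varkappa[x]|^2=\varphi_\varkappa(x)$, $p_\varkappa[x]=\frac{1}{\varkappa^2}(-b_\varkappa[x])^\top$, and $\mathbbm{v}_\varkappa[x]$ is a chosen element of $\operatorname{Argmax}_{v\in\mathbb{R}^d}[-p_\varkappa[x]v-L(x+b_\varkappa[x],v)]$. For a partition $\Delta=\{t_i\}_{i=0}^n$, $0=t_0<\dots<t_n=r$, its fineness is $d(\Delta)=\max_i(t_{i+1}-t_i)$. For $y\in\mathbb{T}^d$ the motion and control are defined recursively: $x_{y,\varkappa,r,\Delta}(0)=y$;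 for $t\in[t_i,t_{i+1})$, $v_{y,\varkappa,r,\Delta}(t)=\mathbbm{v}_\varkappa[x_{y,\varkappa,r,\Delta}(t_i)]$, and for $t\in[t_i,t_{i+1}]$, $x_{y,\varkappa,r,\Delta}(t)=x_{y,\varkappa,r,\Delta}(t_i)+(t-t_i)\mathbbm{v}_\varkappa[x_{y,\varkappa,r,\Delta}(t_i)]$. *)

theory Defs
  imports "HOL-Analysis.Analysis" "HOL-Library.Extended_Real"
begin

text \<open>The torus T^d = R^d / Z^d is represented through Z^d-periodic lifts to R^d,
  with R^d rendered as real^'d for an arbitrary finite index type 'd.
  Row covectors p are rendered as vectors, pv as the inner product.\<close>

definition int_vec :: "real^'d \<Rightarrow> bool" where
  "int_vec z \<longleftrightarrow> (\<forall>i. z $ i \<in> \<int>)"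

definition periodic :: "(real^'d \<Rightarrow> 'b) \<Rightarrow> bool" where
  "periodic f \<longleftrightarrow> (\<forall>x z. int_vec z \<longrightarrow> f (x + z) = f x)"

definition hamiltonian :: "(real^'d \<Rightarrow> real^'d \<Rightarrow> real) \<Rightarrow> real^'d \<Rightarrow> real^'d \<Rightarrow> real" where
  "hamiltonian L x p = (SUP v. p \<bullet> v - L x v)"

definition hadamard_subdiff :: "(real^'d \<Rightarrow> real) \<Rightarrow> real^'d \<Rightarrow> (real^'d) set" where
  "hadamard_subdiff \<phi> x = {p. \<forall>w.
     Liminf (at_right 0 \<times>\<^sub>F nhds w) (\<lambda>(h, w'). ereal ((\<phi> (x + h *\<^sub>R w') - \<phi> x) / h))
       \<ge> ereal (p \<bullet> w)}"

definition lsc :: "(real^'d \<Rightarrow> real) \<Rightarrow> bool" where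
  "lsc f \<longleftrightarrow> (\<forall>c. closed {x. f x \<le> c})"

definition supersolution :: "(real^'d \<Rightarrow> real^'d \<Rightarrow> real) \<Rightarrow> (real^'d \<Rightarrow> real) \<Rightarrow> real \<Rightarrow> bool" where
  "supersolution L \<phi> Hbar \<longleftrightarrow> lsc \<phi> \<and>
     (\<forall>x p. p \<in> hadamard_subdiff \<phi> x \<longrightarrow> hamiltonian L x (- p) \<ge> Hbar)"

definition moreau_yosida :: "(real^'d \<Rightarrow> real) \<Rightarrow> real \<Rightarrow> real^'d \<Rightarrow> real" where
  "moreau_yosida \<phi> \<kappa> x = (INF v. \<phi> (x + v) + (norm v)\<^sup>2 / (2 * \<kappa>\<^sup>2))"

definition is_partition :: "(nat \<Rightarrow> real) \<Rightarrow> nat \<Rightarrow> real \<Rightarrow> bool" where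
  "is_partition t n r \<longleftrightarrow> t 0 = 0 \<and> t n = r \<and> (\<forall>i<n. t i < t (Suc i))"

definition fineness :: "(nat \<Rightarrow> real) \<Rightarrow> nat \<Rightarrow> real" where
  "fineness t n = Max {t (Suc i) - t i | i. i < n}"

primrec motion_node :: "(real^'d \<Rightarrow> real^'d) \<Rightarrow> (nat \<Rightarrow> real) \<Rightarrow> real^'d \<Rightarrow> nat \<Rightarrow> real^'d" where
  "motion_node V t y 0 = y"
| "motion_node V t y (Suc i) = motion_node V t y i + (t (Suc i) - t i) *\<^sub>R V (motion_node V t y i)"

text \<open>Index i of the partition interval [t_i, t_{i+1}) containing s (the last
  interval is closed).\<close>
definition seg_index :: "(nat \<Rightarrow> real) \<Rightarrow> nat \<Rightarrow> real \<Rightarrow> nat" where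
  "seg_index t n s = (GREATEST i. i < n \<and> t i \<le> s)"

definition motion :: "(real^'d \<Rightarrow> real^'d) \<Rightarrow> (nat \<Rightarrow> real) \<Rightarrow> nat \<Rightarrow> real^'d \<Rightarrow> real \<Rightarrow> real^'d" where
  "motion V t n y s = (let i = seg_index t n s in
      motion_node V t y i + (s - t i) *\<^sub>R V (motion_node V t y i))"

definition control :: "(real^'d \<Rightarrow> real^'d) \<Rightarrow> (nat \<Rightarrow> real) \<Rightarrow> nat \<Rightarrow> real^'d \<Rightarrow> real \<Rightarrow> real^'d" where
  "control V t n y s = V (motion_node V t y (seg_index t n s))"

end

theory Submission
  imports Defs
begin

text \<open>Let C be a Lipschitz constant of \<phi> and \<psi> its Moreau--Yosida transform. The
  minimiser b satisfies |b| \<le> 2 C \<kappa>^2, so \<psi> \<le> \<phi> \<le> \<psi> + 2 C^2 \<kappa>^2, and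
  p = -b / \<kappa>^2 is a Hadamard subgradient of \<phi> at x + b. The supersolution property there
  and the choice of v as a maximiser give Hbar \<le> -p v - L(x + b, v); by superlinearity these
  velocities are bounded uniformly in \<kappa>. Semiconcavity of \<psi> gives
  \<psi>(x + h v) \<le> \<psi>(x) + h p v + h^2 |v|^2 / (2 \<kappa>^2), and for small \<kappa> and h the running
  cost along the step differs little from L(x + b, v). Hence \<psi> plus the running cost
  decreases along each step at rate at least Hbar - \<epsilon>; summing over the partition and
  passing from \<psi> back to \<phi> costs one more \<epsilon>.\<close>

lemma periodic_shift_to_unit_cube:
  fixes a :: "real^'d"
  obtains z where "int_vec z" "\<And>i. 0 \<le> (a + z) $ i \<and> (a + z) $ i \<le> 1"
proof
  define z where "z = (\<chi> i. - of_int \<lfloor>a $ i\<rfloor> :: real^'d)"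
  show "int_vec z" unfolding int_vec_def z_def by simp
  show "0 \<le> (a + z) $ i \<and> (a + z) $ i \<le> 1" for i
    using of_int_floor_le[of "a $ i"] real_of_int_floor_add_one_gt[of "a $ i"]
    by (simp add: z_def) linarith
qed

lemma periodic_continuous_bdd_below:
  fixes f :: "real^'d \<Rightarrow> real"
  assumes "periodic f" "continuous_on UNIV f"
  shows "bdd_below (range f)"
proof -
  have "range f \<subseteq> f ` cbox 0 1"
  proof clarify
    fix a :: "real^'d"
    obtain z where z: "int_vec z" "\<And>i. 0 \<le> (a + z) $ i \<and> (a + z) $ i \<le> 1"
      using periodic_shift_to_unit_cube by blast
    then have "a + z \<in> cbox 0 1" by (simp add: mem_box_cart)
    moreover have "f (a + z) = f a" using assms(1) z(1) unfolding periodic_def by blast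
    ultimately show "f a \<in> f ` cbox 0 1" by (metis image_eqI)
  qed
  moreover have "compact (f ` cbox 0 1)"
    by (rule compact_continuous_image) (auto intro: continuous_on_subset[OF assms(2)])
  ultimately show ?thesis
    by (meson bdd_below_mono bounded_imp_bdd_below compact_imp_bounded)
qed

text \<open>By periodicity it suffices to look at the compact set of points whose coordinates lie
  in [-1, 2].\<close>
lemma periodic_uniformly_continuous_in_first:
  fixes L :: "real^'d \<Rightarrow> real^'d \<Rightarrow> real"
  assumes L_cont: "continuous_on UNIV (\<lambda>(x, v). L x v)"
    and L_per: "\<And>v. periodic (\<lambda>x. L x v)"
    and "e > 0"
  obtains \<eta> where "\<eta> > 0"
    "\<And>a a' v. norm v \<le> R \<Longrightarrow> dist a a' \<le> \<eta> \<Longrightarrow> \<bar>L a v - L a' v\<bar> \<le> e"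
proof -
  define S where "S = cbox (vec (-1) :: real^'d) (vec 2) \<times> cball (0 :: real^'d) R"
  have "uniformly_continuous_on S (\<lambda>(x, v). L x v)"
    unfolding S_def
    by (intro compact_uniformly_continuous continuous_on_subset[OF L_cont] compact_Times) auto
  then obtain d where d: "d > 0" "\<And>p p'. p \<in> S \<Longrightarrow> p' \<in> S \<Longrightarrow> dist p' p < d \<Longrightarrow>
      dist ((\<lambda>(x, v). L x v) p') ((\<lambda>(x, v). L x v) p) < e"
    using \<open>e > 0\<close> unfolding uniformly_continuous_on_def by metis
  have "\<bar>L a v - L a' v\<bar> \<le> e" if v: "norm v \<le> R" and aa': "dist a a' \<le> min 1 (d / 2)" for a a' v
  proof -
    obtain z where z: "int_vec z" "\<And>i. 0 \<le> (a + z) $ i \<and> (a + z) $ i \<le> 1"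
      using periodic_shift_to_unit_cube by blast
    have "-1 \<le> (a' + z) $ i \<and> (a' + z) $ i \<le> 2" for i
      using z(2)[of i] component_le_norm_cart[of "a' - a" i] aa'
      by (simp add: dist_norm norm_minus_commute abs_le_iff)
    then have "(a + z, v) \<in> S" "(a' + z, v) \<in> S"
      using z(2) v by (auto simp: S_def mem_box_cart intro: order_trans[of _ 0] order_trans[of _ 1])
    moreover have "dist (a' + z, v) (a + z, v) < d"
      using aa' d(1) by (simp add: dist_Pair_Pair dist_norm norm_minus_commute)
    ultimately have "dist (L (a' + z) v) (L (a + z) v) < e" using d(2) by fastforce
    moreover have "L (a' + z) v = L a' v" "L (a + z) v = L a v"
      using L_per[of v] z(1) unfolding periodic_def by auto
    ultimately show ?thesis by (simp add: dist_real_def abs_minus_commute)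
  qed
  then show thesis using that[of "min 1 (d / 2)"] d(1) by simp
qed

lemma partition_mono:
  assumes "is_partition t n r" "i \<le> j" "j \<le> n"
  shows "t i \<le> t j"
  using assms(2,3)
proof (induction j)
  case (Suc j)
  then have "t j < t (Suc j)" using assms(1) by (simp add: is_partition_def)
  then show ?case using Suc by (cases "i = Suc j") auto
qed simp

lemma partition_step_le_fineness:
  assumes "i < n"
  shows "t (Suc i) - t i \<le> fineness t n"
  unfolding fineness_def
proof (rule Max_ge)
  have "{t (Suc i) - t i | i. i < n} = (\<lambda>i. t (Suc i) - t i) ` {..<n}" by auto
  then show "finite {t (Suc i) - t i | i. i < n}" by simp
qed (use assms in blast)

lemma seg_index_eq:
  assumes P: "is_partition t n r" and "m < n" "t m \<le> s" "s < t (Suc m)"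
  shows "seg_index t n s = m"
  unfolding seg_index_def
proof (rule Greatest_equality)
  fix i assume "i < n \<and> t i \<le> s"
  then show "i \<le> m"
    using partition_mono[OF P, of "Suc m" i] \<open>s < t (Suc m)\<close> by (cases "Suc m \<le> i") auto
qed (use assms in simp)

lemma motion_at_end:
  assumes P: "is_partition t n r" and "n > 0"
  shows "motion V t n y r = motion_node V t y n"
proof -
  obtain k where k: "n = Suc k" using \<open>n > 0\<close> by (cases n) auto
  have "seg_index t n r = k"
    unfolding seg_index_def
  proof (rule Greatest_equality)
    show "k < n \<and> t k \<le> r" using partition_mono[OF P, of k n] P k by (simp add: is_partition_def)
  qed (simp add: k)
  then show ?thesis using P by (simp add: motion_def is_partition_def k)
qed

text \<open>At the right endpoint t (Suc m) the motion may already follow the next segment, hence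
  the spike.\<close>
lemma motion_cost_has_integral_segment:
  fixes l :: "real^'d \<Rightarrow> real^'d \<Rightarrow> real" and V :: "real^'d \<Rightarrow> real^'d" and y :: "real^'d"
  assumes P: "is_partition t n r" and "m < n"
    and l_cont: "continuous_on UNIV (\<lambda>(x, v). l x v)"
  defines "x \<equiv> motion_node V t y m"
  shows "((\<lambda>s. l (motion V t n y s) (control V t n y s)) has_integral
      integral {0..t (Suc m) - t m} (\<lambda>s. l (x + s *\<^sub>R V x) (V x))) {t m..t (Suc m)}"
proof -
  let ?g = "\<lambda>s. l (x + s *\<^sub>R V x) (V x)"
  have "continuous_on {0..t (Suc m) - t m} ?g"
    by (rule continuous_on_compose2[OF l_cont, of _ "\<lambda>s. (x + s *\<^sub>R V x, V x)", simplified])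
      (auto intro!: continuous_intros)
  then have "(?g has_integral integral {0..t (Suc m) - t m} ?g) {0..t (Suc m) - t m}"
    by (intro integrable_integral integrable_continuous_real)
  then have shifted: "((\<lambda>s. ?g (s - t m)) has_integral integral {0..t (Suc m) - t m} ?g)
      {t m..t (Suc m)}"
    using has_integral_shift_real_ivl[of ?g _ 0 "t (Suc m) - t m" "- t m"] by simp
  show ?thesis
  proof (rule has_integral_spike_finite[OF _ _ shifted, where S = "{t (Suc m)}"])
    fix s assume "s \<in> {t m..t (Suc m)} - {t (Suc m)}"
    then have "seg_index t n s = m" using seg_index_eq[OF P \<open>m < n\<close>] by auto
    then show "l (motion V t n y s) (control V t n y s) = ?g (s - t m)"
      by (simp add: motion_def control_def x_def)
  qed simp
qed

lemma motion_cost_le: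
  fixes l :: "real^'d \<Rightarrow> real^'d \<Rightarrow> real" and g :: "real^'d \<Rightarrow> real"
  assumes P: "is_partition t n r" and "r > 0"
    and l_cont: "continuous_on UNIV (\<lambda>(x, v). l x v)"
    and step: "\<And>x h. 0 < h \<Longrightarrow> h \<le> fineness t n \<Longrightarrow>
      g (x + h *\<^sub>R V x) + integral {0..h} (\<lambda>s. l (x + s *\<^sub>R V x) (V x)) \<le> g x + c * h"
  shows "g (motion V t n y r)
      + integral {0..r} (\<lambda>s. l (motion V t n y s) (control V t n y s)) \<le> g y + c * r"
proof -
  let ?f = "\<lambda>s. l (motion V t n y s) (control V t n y s)"
  let ?X = "motion_node V t y"
  have "n > 0" using P \<open>r > 0\<close> by (cases n) (auto simp: is_partition_def)
  have "\<exists>I. (?f has_integral I) {0..t m} \<and> g (?X m) + I \<le> g y + c * t m" if "m \<le> n" for m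
    using that
  proof (induction m)
    case 0
    have "t 0 = 0" using P by (simp add: is_partition_def)
    then show ?case by (auto intro!: exI[of _ 0] simp: has_integral_refl)
  next
    case (Suc m)
    then obtain I where I: "(?f has_integral I) {0..t m}" "g (?X m) + I \<le> g y + c * t m"
      by auto
    define h where "h = t (Suc m) - t m"
    define J where "J = integral {0..h} (\<lambda>s. l (?X m + s *\<^sub>R V (?X m)) (V (?X m)))"
    have "0 < h" "h \<le> fineness t n"
      using P Suc.prems partition_step_le_fineness[of m n t] by (auto simp: h_def is_partition_def)
    then have "g (?X (Suc m)) + J \<le> g (?X m) + c * h"
      using step by (simp add: J_def h_def)
    moreover have "(?f has_integral I + J) {0..t (Suc m)}"
    proof (rule has_integral_combine[OF _ _ I(1)])
      show "0 \<le> t m" using partition_mono[OF P, of 0 m] P Suc.prems by (simp add: is_partition_def)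
      show "(?f has_integral J) {t m..t (Suc m)}"
        using motion_cost_has_integral_segment[OF P _ l_cont] Suc.prems by (simp add: J_def h_def)
    qed (use \<open>0 < h\<close> in \<open>simp add: h_def\<close>)
    ultimately show ?case using I(2) by (intro exI[of _ "I + J"]) (simp add: h_def algebra_simps)
  qed
  then obtain I where I: "(?f has_integral I) {0..r}" "g (?X n) + I \<le> g y + c * r"
    using P by (auto simp: is_partition_def)
  then show ?thesis using integral_unique[OF I(1)] motion_at_end[OF P \<open>n > 0\<close>, of V y] by simp
qed

lemma moreau_yosida_le:
  assumes "bdd_below (range \<phi>)"
  shows "moreau_yosida \<phi> \<kappa> x \<le> \<phi> (x + u) + (norm u)\<^sup>2 / (2 * \<kappa>\<^sup>2)"
  unfolding moreau_yosida_def
proof (rule cINF_lower)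
  obtain m where "\<And>y. m \<le> \<phi> y" using assms by (auto simp: bdd_below_def)
  then show "bdd_below (range (\<lambda>u. \<phi> (x + u) + (norm u)\<^sup>2 / (2 * \<kappa>\<^sup>2)))"
    by (intro bdd_belowI2[of _ m]) (simp add: add_increasing2)
qed simp

lemma moreau_yosida_le_self:
  assumes "bdd_below (range \<phi>)"
  shows "moreau_yosida \<phi> \<kappa> x \<le> \<phi> x"
  using moreau_yosida_le[OF assms, of \<kappa> x 0] by simp

lemma norm_add_scaleR_square:
  fixes b w :: "'a::real_inner"
  shows "(norm (b + h *\<^sub>R w))\<^sup>2 = (norm b)\<^sup>2 + 2 * h * (b \<bullet> w) + h\<^sup>2 * (norm w)\<^sup>2"
  by (simp only: power2_norm_eq_inner inner_add_left inner_add_right inner_scaleR_left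
      inner_scaleR_right inner_commute[of w b]) (simp add: power2_eq_square algebra_simps)

text \<open>Semiconcavity: the competitor b at x yields the competitor b - w at x + w.\<close>
lemma moreau_yosida_add_le:
  assumes "bdd_below (range \<phi>)" "\<kappa> > 0"
  shows "moreau_yosida \<phi> \<kappa> (x + w) \<le> \<phi> (x + b) + (norm b)\<^sup>2 / (2 * \<kappa>\<^sup>2)
      + ((1 / \<kappa>\<^sup>2) *\<^sub>R (- b)) \<bullet> w + (norm w)\<^sup>2 / (2 * \<kappa>\<^sup>2)"
proof -
  have "moreau_yosida \<phi> \<kappa> (x + w) \<le> \<phi> (x + b) + (norm (b + (-1) *\<^sub>R w))\<^sup>2 / (2 * \<kappa>\<^sup>2)"
    using moreau_yosida_le[OF assms(1), of \<kappa> "x + w" "b - w"] by simp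
  also have "\<dots> = \<phi> (x + b) + (norm b)\<^sup>2 / (2 * \<kappa>\<^sup>2)
      + ((1 / \<kappa>\<^sup>2) *\<^sub>R (- b)) \<bullet> w + (norm w)\<^sup>2 / (2 * \<kappa>\<^sup>2)"
    unfolding norm_add_scaleR_square using assms(2) by (simp add: field_simps power2_eq_square)
  finally show ?thesis .
qed

lemma norm_proximal_le:
  assumes "C-lipschitz_on UNIV \<phi>" "\<kappa> > 0"
    and prox: "\<phi> (x + b) + (norm b)\<^sup>2 / (2 * \<kappa>\<^sup>2) \<le> \<phi> x"
  shows "norm b \<le> 2 * C * \<kappa>\<^sup>2"
proof -
  have "\<phi> x - \<phi> (x + b) \<le> C * norm b"
    using lipschitz_onD[OF assms(1), of x "x + b"] by (simp add: dist_real_def dist_norm)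
  then have "(norm b)\<^sup>2 / (2 * \<kappa>\<^sup>2) \<le> C * norm b" using prox by linarith
  then have "norm b * norm b \<le> (2 * C * \<kappa>\<^sup>2) * norm b"
    using \<open>\<kappa> > 0\<close> by (simp add: field_simps power2_eq_square)
  then show ?thesis
    using lipschitz_on_nonneg[OF assms(1)] \<open>\<kappa> > 0\<close> by (cases "norm b = 0") auto
qed

lemma le_proximal_value:
  assumes "C-lipschitz_on UNIV \<phi>" "\<kappa> > 0"
    and prox: "\<phi> (x + b) + (norm b)\<^sup>2 / (2 * \<kappa>\<^sup>2) \<le> \<phi> x"
  shows "\<phi> x \<le> \<phi> (x + b) + (norm b)\<^sup>2 / (2 * \<kappa>\<^sup>2) + 2 * C\<^sup>2 * \<kappa>\<^sup>2"
proof -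
  have "\<phi> x - \<phi> (x + b) \<le> C * norm b"
    using lipschitz_onD[OF assms(1), of x "x + b"] by (simp add: dist_real_def dist_norm)
  also have "\<dots> \<le> C * (2 * C * \<kappa>\<^sup>2)"
    using norm_proximal_le[OF assms] lipschitz_on_nonneg[OF assms(1)] by (simp add: mult_left_mono)
  also have "\<dots> = 2 * C\<^sup>2 * \<kappa>\<^sup>2" by (simp add: power2_eq_square)
  finally have "\<phi> x - \<phi> (x + b) \<le> 2 * C\<^sup>2 * \<kappa>\<^sup>2" .
  moreover have "0 \<le> (norm b)\<^sup>2 / (2 * \<kappa>\<^sup>2)" by simp
  ultimately show ?thesis by linarith
qed

text \<open>\<phi> (x + u) lies above the concave quadratic c - |u|^2 / (2 \<kappa>^2), with equality at
  u = b, so the gradient -b / \<kappa>^2 of the quadratic at b is a subgradient.\<close>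
lemma proximal_mem_hadamard_subdiff:
  assumes "\<kappa> > 0"
    and min: "\<And>u. \<phi> (x + b) + (norm b)\<^sup>2 / (2 * \<kappa>\<^sup>2) \<le> \<phi> (x + u) + (norm u)\<^sup>2 / (2 * \<kappa>\<^sup>2)"
  shows "(1 / \<kappa>\<^sup>2) *\<^sub>R (- b) \<in> hadamard_subdiff \<phi> (x + b)"
  unfolding hadamard_subdiff_def
proof (intro CollectI allI)
  fix w :: "real^'a"
  define p where "p = (1 / \<kappa>\<^sup>2) *\<^sub>R (- b)"
  define F where "F = at_right (0::real) \<times>\<^sub>F nhds w"
  define q where "q = (\<lambda>(h, w'). ereal ((\<phi> (x + b + h *\<^sub>R w') - \<phi> (x + b)) / h))"
  define g where "g = (\<lambda>(h, w'). ereal (p \<bullet> w' - h * (norm w')\<^sup>2 / (2 * \<kappa>\<^sup>2)))"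
  have quotient_ge: "p \<bullet> w' - h * (norm w')\<^sup>2 / (2 * \<kappa>\<^sup>2) \<le> (\<phi> (x + b + h *\<^sub>R w') - \<phi> (x + b)) / h"
    if "h > 0" for h w'
  proof -
    have "h * (p \<bullet> w' - h * (norm w')\<^sup>2 / (2 * \<kappa>\<^sup>2))
        = ((norm b)\<^sup>2 - (norm (b + h *\<^sub>R w'))\<^sup>2) / (2 * \<kappa>\<^sup>2)"
      unfolding norm_add_scaleR_square using \<open>\<kappa> > 0\<close>
      by (simp add: p_def field_simps power2_eq_square)
    also have "\<dots> \<le> \<phi> (x + b + h *\<^sub>R w') - \<phi> (x + b)"
      using min[of "b + h *\<^sub>R w'"] by (simp add: diff_divide_distrib add.assoc)
    finally show ?thesis using \<open>h > 0\<close> by (simp add: pos_le_divide_eq mult.commute)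
  qed
  have "eventually (\<lambda>z. g z \<le> q z) F"
    unfolding F_def eventually_prod_filter
    by (intro exI[of _ "\<lambda>h. h > 0"] exI[of _ "\<lambda>_. True"])
      (auto simp: g_def q_def quotient_ge eventually_at_right_less)
  then have "Liminf F g \<le> Liminf F q" by (rule Liminf_mono)
  moreover have "(g \<longlongrightarrow> ereal (p \<bullet> w - 0 * (norm w)\<^sup>2 / (2 * \<kappa>\<^sup>2))) F"
  proof -
    have "(fst \<longlongrightarrow> 0) F"
      unfolding F_def by (metis filterlim_fst at_within_le_nhds filterlim_mono order_refl)
    moreover have "(snd \<longlongrightarrow> w) F" unfolding F_def by (rule filterlim_snd)
    ultimately show ?thesis
      unfolding g_def case_prod_beta using \<open>\<kappa> > 0\<close>
      by (intro tendsto_intros lim_ereal[THEN iffD2]) auto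
  qed
  then have "Liminf F g = ereal (p \<bullet> w)"
    by (intro lim_imp_Liminf) (auto simp: F_def prod_filter_eq_bot)
  ultimately show "ereal (p \<bullet> w) \<le> Liminf (at_right 0 \<times>\<^sub>F nhds w)
      (\<lambda>(h, w'). ereal ((\<phi> (x + b + h *\<^sub>R w') - \<phi> (x + b)) / h))"
    by (simp add: F_def q_def p_def)
qed

lemma supersolution_le_at_maximizer:
  assumes "supersolution L \<phi> Hbar" "p \<in> hadamard_subdiff \<phi> x"
    and max: "\<And>w. (- p) \<bullet> w - L x w \<le> (- p) \<bullet> v - L x v"
  shows "Hbar \<le> (- p) \<bullet> v - L x v"
proof -
  have "Hbar \<le> hamiltonian L x (- p)" using assms(1,2) unfolding supersolution_def by blast
  also have "\<dots> \<le> (- p) \<bullet> v - L x v"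
    unfolding hamiltonian_def by (rule cSUP_least) (use max in auto)
  finally show ?thesis .
qed

lemma superlinear_maximizer_bounded:
  fixes L :: "'a \<Rightarrow> 'b::real_inner \<Rightarrow> real"
  assumes superlin: "filterlim (\<lambda>v. (INF x. L x v) / norm v) at_top at_infinity"
    and bdd: "\<And>v. bdd_below (range (\<lambda>x. L x v))"
  obtains R where "\<And>x p v. norm p \<le> K \<Longrightarrow> c \<le> p \<bullet> v - L x v \<Longrightarrow> norm v \<le> R"
proof -
  define M where "M = K + \<bar>c\<bar> + 1"
  obtain R0 where R0: "\<And>v. R0 \<le> norm v \<Longrightarrow> M \<le> (INF x. L x v) / norm v"
    using superlin unfolding filterlim_at_top eventually_at_infinity by blast
  have "norm v \<le> max 1 R0" if "norm p \<le> K" "c \<le> p \<bullet> v - L x v" for x p v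
  proof (rule ccontr)
    assume "\<not> norm v \<le> max 1 R0"
    then have v: "norm v > 1" "R0 \<le> norm v" by auto
    have "M * norm v \<le> (INF x. L x v)"
      using R0[OF v(2)] v(1) by (subst (asm) pos_le_divide_eq) auto
    also have "\<dots> \<le> L x v" by (rule cINF_lower[OF bdd]) simp
    finally have "M * norm v \<le> L x v" .
    moreover have "p \<bullet> v \<le> K * norm v"
      using norm_cauchy_schwarz[of p v] mult_right_mono[OF \<open>norm p \<le> K\<close> norm_ge_zero, of v]
      by simp
    ultimately have "c \<le> - ((\<bar>c\<bar> + 1) * norm v)" using that(2) by (simp add: M_def algebra_simps)
    moreover have "\<bar>c\<bar> + 1 < (\<bar>c\<bar> + 1) * norm v"
      using mult_strict_left_mono[OF v(1), of "\<bar>c\<bar> + 1"] by (simp add: add_nonneg_pos)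
    ultimately show False by linarith
  qed
  then show thesis using that by blast
qed

lemma mult_le_of_le_divide_add_one:
  fixes a b x :: real
  assumes "x \<le> b / (a + 1)" "0 \<le> a" "0 \<le> x"
  shows "x * a \<le> b"
proof -
  have "x * a \<le> x * (a + 1)" using assms(3) by (simp add: algebra_simps)
  also have "\<dots> \<le> b" using assms by (simp add: pos_le_divide_eq add_nonneg_pos)
  finally show ?thesis .
qed

lemma mult_square_le_of_le_min_divide:
  fixes a b x :: real
  assumes "x \<le> min 1 (b / (a + 1))" "0 \<le> a" "0 \<le> x"
  shows "a * x\<^sup>2 \<le> b"
proof -
  have "x\<^sup>2 \<le> x" using assms(1,3) by (simp add: power2_eq_square mult_left_le_one_le)
  then have "x\<^sup>2 \<le> b / (a + 1)" using assms(1) by simp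
  from mult_le_of_le_divide_add_one[OF this assms(2)] show ?thesis by (simp add: mult.commute)
qed

locale moreau_yosida_feedback =
  fixes L :: "real^'d \<Rightarrow> real^'d \<Rightarrow> real"
    and \<phi> :: "real^'d \<Rightarrow> real"
    and Hbar :: real
    and b vv :: "real \<Rightarrow> real^'d \<Rightarrow> real^'d"
    and C :: real
  assumes L_cont: "continuous_on UNIV (\<lambda>(x, v). L x v)"
    and L_per: "\<And>v. periodic (\<lambda>x. L x v)"
    and L_superlin: "filterlim (\<lambda>v. (INF x. L x v) / norm v) at_top at_infinity"
    and \<phi>_per: "periodic \<phi>"
    and \<phi>_lip: "C-lipschitz_on UNIV \<phi>"
    and super: "supersolution L \<phi> Hbar"
    and b_min: "\<And>\<kappa> x. \<kappa> > 0 \<Longrightarrow>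
        \<phi> (x + b \<kappa> x) + (norm (b \<kappa> x))\<^sup>2 / (2 * \<kappa>\<^sup>2) = moreau_yosida \<phi> \<kappa> x"
    and vv_max: "\<And>\<kappa> x w. \<kappa> > 0 \<Longrightarrow>
        - ((1 / \<kappa>\<^sup>2) *\<^sub>R (- b \<kappa> x)) \<bullet> w - L (x + b \<kappa> x) w
          \<le> - ((1 / \<kappa>\<^sup>2) *\<^sub>R (- b \<kappa> x)) \<bullet> vv \<kappa> x - L (x + b \<kappa> x) (vv \<kappa> x)"
begin

lemma \<phi>_bdd_below: "bdd_below (range \<phi>)"
  using periodic_continuous_bdd_below[OF \<phi>_per lipschitz_on_continuous_on[OF \<phi>_lip]] .

lemma L_bdd_below: "bdd_below (range (\<lambda>x. L x v))"
proof (rule periodic_continuous_bdd_below[OF L_per])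
  show "continuous_on UNIV (\<lambda>x. L x v)"
    by (rule continuous_on_compose2[OF L_cont, of UNIV "\<lambda>x. (x, v)", simplified])
      (auto intro: continuous_intros)
qed

lemma b_minimal:
  assumes "\<kappa> > 0"
  shows "\<phi> (x + b \<kappa> x) + (norm (b \<kappa> x))\<^sup>2 / (2 * \<kappa>\<^sup>2) \<le> \<phi> (x + u) + (norm u)\<^sup>2 / (2 * \<kappa>\<^sup>2)"
  using b_min[OF assms] moreau_yosida_le[OF \<phi>_bdd_below] by metis

lemma norm_b_le: "\<kappa> > 0 \<Longrightarrow> norm (b \<kappa> x) \<le> 2 * C * \<kappa>\<^sup>2"
  using norm_proximal_le[OF \<phi>_lip] b_minimal[of \<kappa> x 0] by simp

lemma le_moreau_yosida: "\<kappa> > 0 \<Longrightarrow> \<phi> x \<le> moreau_yosida \<phi> \<kappa> x + 2 * C\<^sup>2 * \<kappa>\<^sup>2"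
  using le_proximal_value[OF \<phi>_lip, of \<kappa> x "b \<kappa> x"] b_minimal[of \<kappa> x 0] b_min[of \<kappa> x] by simp

lemma Hbar_le_feedback:
  assumes "\<kappa> > 0"
  shows "Hbar \<le> - ((1 / \<kappa>\<^sup>2) *\<^sub>R (- b \<kappa> x)) \<bullet> vv \<kappa> x - L (x + b \<kappa> x) (vv \<kappa> x)"
  using supersolution_le_at_maximizer[OF super proximal_mem_hadamard_subdiff vv_max]
    assms b_minimal by blast

text \<open>The bound is uniform in \<kappa> because the covectors b / \<kappa>^2 have norm at most 2 C.\<close>
lemma vv_bounded:
  obtains R where "0 \<le> R" "\<And>\<kappa> x. \<kappa> > 0 \<Longrightarrow> norm (vv \<kappa> x) \<le> R"
proof -
  obtain R where R: "\<And>x p v. norm p \<le> 2 * C \<Longrightarrow> Hbar \<le> p \<bullet> v - L x v \<Longrightarrow> norm v \<le> R"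
    using superlinear_maximizer_bounded[OF L_superlin L_bdd_below] by blast
  have "norm (vv \<kappa> x) \<le> R" if "\<kappa> > 0" for \<kappa> x
  proof (rule R)
    show "norm (- ((1 / \<kappa>\<^sup>2) *\<^sub>R (- b \<kappa> x))) \<le> 2 * C"
      using norm_b_le[OF that, of x] that by (simp add: divide_simps)
  qed (rule Hbar_le_feedback[OF that])
  moreover have "0 \<le> R" using calculation[of 1 0] norm_ge_zero[of "vv 1 0"] by linarith
  ultimately show thesis using that by blast
qed

lemma feedback_running_cost_le:
  assumes "\<kappa> > 0" "0 \<le> h"
    and \<eta>: "\<And>a a' v. norm v \<le> R \<Longrightarrow> dist a a' \<le> \<eta> \<Longrightarrow> \<bar>L a v - L a' v\<bar> \<le> e"
    and R: "norm (vv \<kappa> x) \<le> R"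
    and close: "2 * C * \<kappa>\<^sup>2 + h * R \<le> \<eta>"
  shows "integral {0..h} (\<lambda>s. L (x + s *\<^sub>R vv \<kappa> x) (vv \<kappa> x))
    \<le> h * (L (x + b \<kappa> x) (vv \<kappa> x) + e)"
proof -
  let ?v = "vv \<kappa> x" and ?l = "L (x + b \<kappa> x) (vv \<kappa> x)"
  have le: "L (x + s *\<^sub>R ?v) ?v \<le> ?l + e" if "s \<in> {0..h}" for s
  proof -
    have "norm (s *\<^sub>R ?v) \<le> h * R" using that R \<open>0 \<le> h\<close> by (auto intro!: mult_mono)
    then have "dist (x + b \<kappa> x) (x + s *\<^sub>R ?v) \<le> \<eta>"
      using norm_b_le[OF \<open>\<kappa> > 0\<close>, of x] norm_triangle_ineq4[of "b \<kappa> x" "s *\<^sub>R ?v"] close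
      by (simp add: dist_norm)
    then show ?thesis using \<eta>[OF R] by fastforce
  qed
  have "(\<lambda>s. L (x + s *\<^sub>R ?v) ?v) integrable_on {0..h}"
    by (intro integrable_continuous_real continuous_on_compose2[OF L_cont,
          of _ "\<lambda>s. (x + s *\<^sub>R ?v, ?v)", simplified]) (auto intro!: continuous_intros)
  moreover have "((\<lambda>s. ?l + e) has_integral h * (?l + e)) {0..h}"
    using has_integral_const_real[of "?l + e" 0 h] \<open>0 \<le> h\<close> by simp
  ultimately show ?thesis by (rule has_integral_le[OF integrable_integral _ le])
qed

lemma feedback_step_le:
  assumes "\<kappa> > 0" "0 \<le> h"
    and \<eta>: "\<And>a a' v. norm v \<le> R \<Longrightarrow> dist a a' \<le> \<eta> \<Longrightarrow> \<bar>L a v - L a' v\<bar> \<le> e"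
    and R: "norm (vv \<kappa> x) \<le> R"
    and close: "2 * C * \<kappa>\<^sup>2 + h * R \<le> \<eta>"
    and slow: "h * (R\<^sup>2 / (2 * \<kappa>\<^sup>2)) \<le> e"
  shows "moreau_yosida \<phi> \<kappa> (x + h *\<^sub>R vv \<kappa> x)
      + integral {0..h} (\<lambda>s. L (x + s *\<^sub>R vv \<kappa> x) (vv \<kappa> x))
    \<le> moreau_yosida \<phi> \<kappa> x + (2 * e - Hbar) * h"
proof -
  define v where "v = vv \<kappa> x"
  define p where "p = (1 / \<kappa>\<^sup>2) *\<^sub>R (- b \<kappa> x)"
  define l where "l = L (x + b \<kappa> x) v"
  have "moreau_yosida \<phi> \<kappa> (x + h *\<^sub>R v)
      \<le> moreau_yosida \<phi> \<kappa> x + h * (p \<bullet> v) + h * (h * (norm v)\<^sup>2 / (2 * \<kappa>\<^sup>2))"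
    using moreau_yosida_add_le[OF \<phi>_bdd_below \<open>\<kappa> > 0\<close>, of x "h *\<^sub>R v" "b \<kappa> x"] b_min[OF \<open>\<kappa> > 0\<close>]
      \<open>0 \<le> h\<close> by (simp add: p_def power2_eq_square mult_ac)
  moreover have "h * (h * (norm v)\<^sup>2 / (2 * \<kappa>\<^sup>2)) \<le> h * e"
  proof (rule mult_left_mono[OF _ \<open>0 \<le> h\<close>])
    have "h * (norm v)\<^sup>2 / (2 * \<kappa>\<^sup>2) \<le> h * (R\<^sup>2 / (2 * \<kappa>\<^sup>2))"
      using R \<open>0 \<le> h\<close> by (simp add: v_def power_mono mult_left_mono divide_right_mono)
    then show "h * (norm v)\<^sup>2 / (2 * \<kappa>\<^sup>2) \<le> e" using slow by linarith
  qed
  moreover have "integral {0..h} (\<lambda>s. L (x + s *\<^sub>R v) v) \<le> h * (l + e)"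
    unfolding v_def l_def by (rule feedback_running_cost_le[OF assms(1,2) \<eta> R close])
  moreover have "h * Hbar \<le> h * (- (p \<bullet> v) - l)"
    using mult_left_mono[OF Hbar_le_feedback[OF \<open>\<kappa> > 0\<close>, of x] \<open>0 \<le> h\<close>]
    by (simp add: p_def v_def l_def)
  ultimately show ?thesis unfolding v_def[symmetric] by (simp add: algebra_simps)
qed

lemma feedback_parameters:
  assumes "\<epsilon> > 0"
  obtains \<kappa>0 \<delta> where "\<kappa>0 > 0" "\<And>\<kappa>. \<delta> \<kappa> > 0"
    "\<And>\<kappa> x. \<kappa> \<in> {0<..\<kappa>0} \<Longrightarrow> \<phi> x \<le> moreau_yosida \<phi> \<kappa> x + \<epsilon>"
    "\<And>\<kappa> x h. \<kappa> \<in> {0<..\<kappa>0} \<Longrightarrow> 0 \<le> h \<Longrightarrow> h \<le> \<delta> \<kappa> \<Longrightarrow>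
      moreau_yosida \<phi> \<kappa> (x + h *\<^sub>R vv \<kappa> x)
        + integral {0..h} (\<lambda>s. L (x + s *\<^sub>R vv \<kappa> x) (vv \<kappa> x))
      \<le> moreau_yosida \<phi> \<kappa> x + (\<epsilon> - Hbar) * h"
proof -
  obtain R where R: "0 \<le> R" "\<And>\<kappa> x. \<kappa> > 0 \<Longrightarrow> norm (vv \<kappa> x) \<le> R"
    using vv_bounded by blast
  obtain \<eta> where \<eta>: "\<eta> > 0" "\<And>a a' v. norm v \<le> R \<Longrightarrow> dist a a' \<le> \<eta> \<Longrightarrow> \<bar>L a v - L a' v\<bar> \<le> \<epsilon> / 2"
    using periodic_uniformly_continuous_in_first[OF L_cont L_per, of "\<epsilon> / 2"] \<open>\<epsilon> > 0\<close> by auto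
  have "0 \<le> C" using lipschitz_on_nonneg[OF \<phi>_lip] .
  define \<kappa>0 where "\<kappa>0 = min (min 1 (\<eta> / 2 / (2 * C + 1))) (min 1 (\<epsilon> / (2 * C\<^sup>2 + 1)))"
  define \<delta> where "\<delta> \<kappa> = min (\<eta> / 2 / (R + 1)) (\<epsilon> / 2 / (R\<^sup>2 / (2 * \<kappa>\<^sup>2) + 1))" for \<kappa>
  have \<kappa>_small: "2 * C * \<kappa>\<^sup>2 \<le> \<eta> / 2" "2 * C\<^sup>2 * \<kappa>\<^sup>2 \<le> \<epsilon>" if "\<kappa> \<in> {0<..\<kappa>0}" for \<kappa>
  proof -
    have \<kappa>: "\<kappa> \<le> min 1 (\<eta> / 2 / (2 * C + 1))" "\<kappa> \<le> min 1 (\<epsilon> / (2 * C\<^sup>2 + 1))"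
      using that unfolding \<kappa>0_def by auto
    show "2 * C * \<kappa>\<^sup>2 \<le> \<eta> / 2"
      by (rule mult_square_le_of_le_min_divide[OF \<kappa>(1)]) (use \<open>0 \<le> C\<close> that in auto)
    show "2 * C\<^sup>2 * \<kappa>\<^sup>2 \<le> \<epsilon>"
      by (rule mult_square_le_of_le_min_divide[OF \<kappa>(2)]) (use that in auto)
  qed
  have h_small: "h * R \<le> \<eta> / 2" "h * (R\<^sup>2 / (2 * \<kappa>\<^sup>2)) \<le> \<epsilon> / 2"
    if h: "0 \<le> h" "h \<le> \<delta> \<kappa>" for \<kappa> h
  proof -
    have "h \<le> \<eta> / 2 / (R + 1)" "h \<le> \<epsilon> / 2 / (R\<^sup>2 / (2 * \<kappa>\<^sup>2) + 1)"
      using h by (simp_all add: \<delta>_def)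
    then show "h * R \<le> \<eta> / 2" "h * (R\<^sup>2 / (2 * \<kappa>\<^sup>2)) \<le> \<epsilon> / 2"
      using mult_le_of_le_divide_add_one h(1) \<open>0 \<le> R\<close>
      by (meson zero_le_power2 divide_nonneg_nonneg mult_nonneg_nonneg zero_le_numeral)+
  qed
  show thesis
  proof (rule that)
    show "\<kappa>0 > 0" using \<eta>(1) \<open>\<epsilon> > 0\<close> \<open>0 \<le> C\<close> by (simp add: \<kappa>0_def add_nonneg_pos)
    show "\<delta> \<kappa> > 0" for \<kappa> using \<eta>(1) \<open>\<epsilon> > 0\<close> \<open>0 \<le> R\<close> by (simp add: \<delta>_def add_nonneg_pos)
    show "\<phi> x \<le> moreau_yosida \<phi> \<kappa> x + \<epsilon>" if "\<kappa> \<in> {0<..\<kappa>0}" for \<kappa> x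
      using le_moreau_yosida[of \<kappa> x] \<kappa>_small(2)[OF that] that by simp
    show "moreau_yosida \<phi> \<kappa> (x + h *\<^sub>R vv \<kappa> x)
        + integral {0..h} (\<lambda>s. L (x + s *\<^sub>R vv \<kappa> x) (vv \<kappa> x))
      \<le> moreau_yosida \<phi> \<kappa> x + (\<epsilon> - Hbar) * h"
      if "\<kappa> \<in> {0<..\<kappa>0}" "0 \<le> h" "h \<le> \<delta> \<kappa>" for \<kappa> x h
    proof -
      have "2 * C * \<kappa>\<^sup>2 + h * R \<le> \<eta>" using \<kappa>_small(1)[OF that(1)] h_small(1)[OF that(2,3)] by simp
      then show ?thesis
        using feedback_step_le[OF _ that(2) \<eta>(2) R(2) _ h_small(2)[OF that(2,3)]] that(1)
        by simp
    qed
  qed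
qed

end

theorem theorem1:
  fixes L :: "real^'d \<Rightarrow> real^'d \<Rightarrow> real"
    and \<phi> :: "real^'d \<Rightarrow> real"
    and Hbar :: real
    and b vv :: "real \<Rightarrow> real^'d \<Rightarrow> real^'d"
    and \<epsilon> :: real
  assumes L_cont: "continuous_on UNIV (\<lambda>(x, v). L x v)"
    and L_per: "\<And>v. periodic (\<lambda>x. L x v)"
    and L_superlin: "filterlim (\<lambda>v. (INF x. L x v) / norm v) at_top at_infinity"
    and \<phi>_per: "periodic \<phi>"
    and \<phi>_lip: "\<exists>C. C-lipschitz_on UNIV \<phi>"
    and super: "supersolution L \<phi> Hbar"
    and b_per: "\<And>\<kappa>. periodic (b \<kappa>)"
    and b_min: "\<And>\<kappa> x. \<kappa> > 0 \<Longrightarrow>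
        \<phi> (x + b \<kappa> x) + (norm (b \<kappa> x))\<^sup>2 / (2 * \<kappa>\<^sup>2) = moreau_yosida \<phi> \<kappa> x"
    and vv_per: "\<And>\<kappa>. periodic (vv \<kappa>)"
    and vv_max: "\<And>\<kappa> x w. \<kappa> > 0 \<Longrightarrow>
        - ((1 / \<kappa>\<^sup>2) *\<^sub>R (- b \<kappa> x)) \<bullet> w - L (x + b \<kappa> x) w
          \<le> - ((1 / \<kappa>\<^sup>2) *\<^sub>R (- b \<kappa> x)) \<bullet> vv \<kappa> x - L (x + b \<kappa> x) (vv \<kappa> x)"
    and eps: "\<epsilon> > 0"
  shows "\<exists>\<kappa>0 > 0. \<exists>\<delta> :: real \<Rightarrow> real. (\<forall>\<kappa>\<in>{0<..\<kappa>0}. \<delta> \<kappa> > 0) \<and>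
     (\<forall>r > 0. \<forall>\<kappa>\<in>{0<..\<kappa>0}. \<forall>t n. is_partition t n r \<longrightarrow> fineness t n \<le> \<delta> \<kappa> \<longrightarrow>
        (\<forall>y. \<phi> (motion (vv \<kappa>) t n y r)
              + integral {0..r} (\<lambda>s. L (motion (vv \<kappa>) t n y s) (control (vv \<kappa>) t n y s))
            \<le> \<phi> y - Hbar * r + (r + 1) * \<epsilon>))"
proof -
  obtain C where "C-lipschitz_on UNIV \<phi>" using \<phi>_lip by blast
  then interpret moreau_yosida_feedback L \<phi> Hbar b vv C
    using L_cont L_per L_superlin \<phi>_per super b_min vv_max by unfold_locales
  obtain \<kappa>0 \<delta> where "\<kappa>0 > 0" "\<And>\<kappa>. \<delta> \<kappa> > 0"
    and \<phi>_le: "\<And>\<kappa> x. \<kappa> \<in> {0<..\<kappa>0} \<Longrightarrow> \<phi> x \<le> moreau_yosida \<phi> \<kappa> x + \<epsilon>"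
    and step: "\<And>\<kappa> x h. \<kappa> \<in> {0<..\<kappa>0} \<Longrightarrow> 0 \<le> h \<Longrightarrow> h \<le> \<delta> \<kappa> \<Longrightarrow>
      moreau_yosida \<phi> \<kappa> (x + h *\<^sub>R vv \<kappa> x)
        + integral {0..h} (\<lambda>s. L (x + s *\<^sub>R vv \<kappa> x) (vv \<kappa> x))
      \<le> moreau_yosida \<phi> \<kappa> x + (\<epsilon> - Hbar) * h"
    using feedback_parameters[OF eps] by blast
  show ?thesis
  proof (intro exI[of _ \<kappa>0] exI[of _ \<delta>] conjI allI impI ballI)
    fix r \<kappa> t n y
    assume "r > 0" "\<kappa> \<in> {0<..\<kappa>0}" "is_partition t n r" "fineness t n \<le> \<delta> \<kappa>"
    have "moreau_yosida \<phi> \<kappa> (motion (vv \<kappa>) t n y r)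
        + integral {0..r} (\<lambda>s. L (motion (vv \<kappa>) t n y s) (control (vv \<kappa>) t n y s))
      \<le> moreau_yosida \<phi> \<kappa> y + (\<epsilon> - Hbar) * r"
      by (rule motion_cost_le[OF \<open>is_partition t n r\<close> \<open>r > 0\<close> L_cont])
        (use step[OF \<open>\<kappa> \<in> {0<..\<kappa>0}\<close>] \<open>fineness t n \<le> \<delta> \<kappa>\<close> in auto)
    then show "\<phi> (motion (vv \<kappa>) t n y r)
        + integral {0..r} (\<lambda>s. L (motion (vv \<kappa>) t n y s) (control (vv \<kappa>) t n y s))
      \<le> \<phi> y - Hbar * r + (r + 1) * \<epsilon>"
      using \<phi>_le[OF \<open>\<kappa> \<in> {0<..\<kappa>0}\<close>, of "motion (vv \<kappa>) t n y r"] moreau_yosida_le_self[OF \<phi>_bdd_below, of \<kappa> y]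
      by (simp add: algebra_simps)
  qed (use \<open>\<kappa>0 > 0\<close> \<open>\<And>\<kappa>. \<delta> \<kappa> > 0\<close> in auto)
qed

end
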